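(* If the supply graph $G$ is a cycle and the demand digraph $H=(T,L)$ has at most two OD-pairs ($|L|\le 2$), then $(G,H)$ has the uniqueness property.
   Context: A supply graph is a finite undirected graph $G=(V,E)$ with directed version obtained by replacing each edge by two opposite arcs; a demand digraph is a simple digraph $H=(T,L)$ with $T\subseteq V$, whose arcs are OD-pairs; routes for $(o,d)\in L$ are directed $(o,d)$-paths in the directed version of $G$. Users (a bounded interval with Lebesgue measure, partitioned measurably by OD-pair) choose routes; flows are measures of users using each arc; each user has nonnegative continuous strictly increasing arc cost functions (measurable in the user); an equilibrium is a profile where every user takes a minimal-cost route. $(G,H)$ has the uniqueness property if for every measurable partition of users into OD-pairs and every such cost assignment, the flow on each arc is the same in all equilibria. *)

theory Defs
  imports "HOL-Analysis.Analysis"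
begin

definition supply_graph :: "'v set \<Rightarrow> 'v set set \<Rightarrow> bool" where
  "supply_graph V E \<longleftrightarrow> finite V \<and>
     (\<forall>e\<in>E. \<exists>u v. u \<in> V \<and> v \<in> V \<and> u \<noteq> v \<and> e = {u, v})"

definition is_cycle :: "'v set \<Rightarrow> 'v set set \<Rightarrow> bool" where
  "is_cycle V E \<longleftrightarrow> supply_graph V E \<and>
     (\<exists>n f. n \<ge> 3 \<and> bij_betw f {..<n} V \<and> E = {{f i, f (Suc i mod n)} | i. i < n})"

definition demand_digraph :: "'v set \<Rightarrow> 'v set \<Rightarrow> ('v \<times> 'v) set \<Rightarrow> bool" where
  "demand_digraph V T L \<longleftrightarrow> T \<subseteq> V \<and> L \<subseteq> T \<times> T \<and> (\<forall>(s, t)\<in>L. s \<noteq> t)"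

definition darcs :: "'v set set \<Rightarrow> ('v \<times> 'v) set" where
  "darcs E = {(u, v). {u, v} \<in> E}"

definition is_route :: "'v set set \<Rightarrow> 'v \<Rightarrow> 'v \<Rightarrow> 'v list \<Rightarrow> bool" where
  "is_route E s t p \<longleftrightarrow> p \<noteq> [] \<and> distinct p \<and> hd p = s \<and> last p = t \<and>
     (\<forall>i. Suc i < length p \<longrightarrow> (p ! i, p ! Suc i) \<in> darcs E)"

definition route_arcs :: "'v list \<Rightarrow> ('v \<times> 'v) set" where
  "route_arcs p = set (zip p (tl p))"

definition flow :: "real set \<Rightarrow> (real \<Rightarrow> 'v list) \<Rightarrow> ('v \<times> 'v) \<Rightarrow> real" where
  "flow I \<sigma> e = measure lebesgue {x \<in> I. e \<in> route_arcs (\<sigma> x)}"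

definition route_cost ::
  "(real \<Rightarrow> ('v \<times> 'v) \<Rightarrow> real \<Rightarrow> real) \<Rightarrow> real \<Rightarrow> 'v list \<Rightarrow> (('v \<times> 'v) \<Rightarrow> real) \<Rightarrow> real" where
  "route_cost c x p F = (\<Sum>e\<in>route_arcs p. c x e (F e))"

definition valid_partition :: "('v \<times> 'v) set \<Rightarrow> real set \<Rightarrow> (real \<Rightarrow> 'v \<times> 'v) \<Rightarrow> bool" where
  "valid_partition L I od \<longleftrightarrow> (\<forall>x\<in>I. od x \<in> L) \<and> (\<forall>l\<in>L. {x \<in> I. od x = l} \<in> sets lebesgue)"

definition valid_costs :: "'v set set \<Rightarrow> real set \<Rightarrow> (real \<Rightarrow> ('v \<times> 'v) \<Rightarrow> real \<Rightarrow> real) \<Rightarrow> bool" where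
  "valid_costs E I c \<longleftrightarrow> (\<forall>e\<in>darcs E.
      (\<forall>x\<in>I. continuous_on {0..} (c x e) \<and> strict_mono_on {0..} (c x e) \<and> (\<forall>t\<ge>0. c x e t \<ge> 0)) \<and>
      (\<forall>t. (\<lambda>x. c x e t) \<in> borel_measurable (restrict_space lebesgue I)))"

definition is_equilibrium ::
  "'v set set \<Rightarrow> real set \<Rightarrow> (real \<Rightarrow> 'v \<times> 'v) \<Rightarrow> (real \<Rightarrow> ('v \<times> 'v) \<Rightarrow> real \<Rightarrow> real) \<Rightarrow> (real \<Rightarrow> 'v list) \<Rightarrow> bool" where
  "is_equilibrium E I od c \<sigma> \<longleftrightarrow>
     (\<forall>p. {x \<in> I. \<sigma> x = p} \<in> sets lebesgue) \<and>
     (\<forall>x\<in>I. is_route E (fst (od x)) (snd (od x)) (\<sigma> x) \<and>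
        (\<forall>q. is_route E (fst (od x)) (snd (od x)) q \<longrightarrow>
             route_cost c x (\<sigma> x) (flow I \<sigma>) \<le> route_cost c x q (flow I \<sigma>)))"

definition uniqueness_property ::
  "real set \<Rightarrow> 'v set \<Rightarrow> 'v set set \<Rightarrow> 'v set \<Rightarrow> ('v \<times> 'v) set \<Rightarrow> bool" where
  "uniqueness_property I V E T L \<longleftrightarrow>
     (\<forall>(od :: real \<Rightarrow> 'v \<times> 'v) c \<sigma>1 \<sigma>2.
        valid_partition L I od \<longrightarrow> valid_costs E I c \<longrightarrow>
        is_equilibrium E I od c \<sigma>1 \<longrightarrow> is_equilibrium E I od c \<sigma>2 \<longrightarrow>
        (\<forall>e\<in>darcs E. flow I \<sigma>1 e = flow I \<sigma>2 e))"

end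

theory Submission
  imports Defs
begin

(* On a cycle every route runs either entirely clockwise or entirely counterclockwise, and
   each OD-pair has at most one route of each orientation.  Hence the flow of an equilibrium
   is determined by the measures of the clockwise users of the OD-pairs, and the difference
   of the flows of two equilibria is a signed sum of the "shifts" of these measures.
   Take an OD-pair l with a shift of maximal absolute value, positive after possibly
   exchanging the two equilibria.  A user of l who switched from its counterclockwise to its
   clockwise route must find both routes equally good, which by strict monotonicity of the
   costs forces the flows to agree on the clockwise route of l.  With only one other pair k
   this forces k to cancel the shift of l on that route; repeating the argument from k
   shows that l and k have the same clockwise route, hence l = k: a contradiction. *)

lemma route_arcs_simps [simp]:
  "route_arcs [] = {}"
  "route_arcs [u] = {}"
  "route_arcs (u # v # p) = insert (u, v) (route_arcs (v # p))"
  by (simp_all add: route_arcs_def)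

lemma route_arcs_conv_nth: "route_arcs p = {(p ! i, p ! Suc i) | i. Suc i < length p}"
  by (auto simp: route_arcs_def set_zip nth_tl)

lemma is_route_iff:
  "is_route E s t p \<longleftrightarrow>
     p \<noteq> [] \<and> distinct p \<and> hd p = s \<and> last p = t \<and> route_arcs p \<subseteq> darcs E"
  unfolding is_route_def route_arcs_conv_nth by blast

lemma Domain_route_arcs: "Domain (route_arcs p) = set (butlast p)"
  by (induction p rule: induct_list012) auto

lemma Range_route_arcs: "Range (route_arcs p) = set (tl p)"
  by (induction p rule: induct_list012) auto

(* For a path, the first vertex is the unique tail that is never a head, and the
   last vertex the unique head that is never a tail: the arcs determine the endpoints. *)
lemma route_arcs_source_sink:
  assumes "distinct p" and "2 \<le> length p"
  shows "Domain (route_arcs p) - Range (route_arcs p) = {hd p}"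
    and "Range (route_arcs p) - Domain (route_arcs p) = {last p}"
proof -
  obtain u w q where p: "p = u # q @ [w]"
    using assms(2) by (metis One_nat_def Suc_1 Suc_le_length_iff rev_exhaust append_Cons neq_Nil_conv)
  show "Domain (route_arcs p) - Range (route_arcs p) = {hd p}"
    "Range (route_arcs p) - Domain (route_arcs p) = {last p}"
    using assms(1) unfolding Domain_route_arcs Range_route_arcs p
    by (auto simp: butlast_append)
qed

lemma route_unique_in_single_valued:
  assumes "single_valued R" and "route_arcs p \<subseteq> R" and "route_arcs q \<subseteq> R"
    and "distinct p" and "distinct q" and "p \<noteq> []" and "q \<noteq> []"
    and "hd p = hd q" and "last p = last q"
  shows "p = q"
  using assms(2-)
proof (induction p arbitrary: q rule: induct_list012)
  case 1
  then show ?case by simp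
next
  case (2 u)
  then show ?case by (cases q) (auto dest: last_in_set split: if_splits)
next
  case (3 u v p)
  obtain q' where q: "q = u # q'" using "3.prems" by (cases q) auto
  have "q' \<noteq> []"
  proof
    assume "q' = []"
    then have "last (v # p) = u" using "3.prems" q by simp
    then show False using "3.prems" last_in_set[of "v # p"] by auto
  qed
  then obtain v' q'' where q': "q' = v' # q''" by (cases q') auto
  have "v' = v"
    using "3.prems" q q' single_valuedD[OF assms(1)] by auto
  then have "v # p = q'"
    using "3.prems" q q' by (intro "3.IH") auto
  then show ?case using q by simp
qed

(* If R is injective and functional, a path using arcs of R in either direction uses
   one direction only: turning back at an inner vertex would revisit a vertex. *)
lemma route_arcs_oriented:
  assumes "single_valued R" and "single_valued (R\<inverse>)"
    and "distinct p" and "route_arcs p \<subseteq> R \<union> R\<inverse>"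
  shows "route_arcs p \<subseteq> R \<or> route_arcs p \<subseteq> R\<inverse>"
  using assms(3,4)
proof (induction p rule: induct_list012)
  case (3 u v p)
  show ?case
  proof (cases p)
    case Nil
    then show ?thesis using "3.prems" by auto
  next
    case (Cons w p')
    have "u \<noteq> w" using "3.prems" Cons by auto
    then have "\<not> ((u, v) \<in> R \<and> (w, v) \<in> R)" and "\<not> ((v, u) \<in> R \<and> (v, w) \<in> R)"
      using assms(1,2) by (auto dest: single_valuedD)
    then show ?thesis using "3.IH" "3.prems" Cons by auto
  qed
qed simp_all

locale cycle_graph =
  fixes V :: "'v set" and E :: "'v set set" and n :: nat and f :: "nat \<Rightarrow> 'v"
  assumes length_ge_3: "3 \<le> n"
    and bij: "bij_betw f {..<n} V"
    and edges: "E = {{f i, f (Suc i mod n)} | i. i < n}"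
begin

definition clockwise :: "('v \<times> 'v) set" where
  "clockwise = {(f i, f (Suc i mod n)) | i. i < n}"

lemma f_eq_iff: "i < n \<Longrightarrow> j < n \<Longrightarrow> f i = f j \<longleftrightarrow> i = j"
  using bij by (auto simp: bij_betw_def inj_on_def)

lemma darcs_cycle: "darcs E = clockwise \<union> clockwise\<inverse>"
  unfolding darcs_def edges clockwise_def by (auto simp: doubleton_eq_iff)

(* Needs n >= 3: on a 2-cycle the two arcs would be mutually reverse. *)
lemma clockwise_antisym: "clockwise \<inter> clockwise\<inverse> = {}"
proof -
  have False if "i < n" "j < n" "f i = f (Suc j mod n)" "f (Suc i mod n) = f j" for i j
  proof -
    have "i = Suc j mod n" "Suc i mod n = j"
      using that f_eq_iff[of i "Suc j mod n"] f_eq_iff[of "Suc i mod n" j] length_ge_3 by auto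
    then show False using that length_ge_3 by (auto simp: mod_Suc split: if_splits)
  qed
  then show ?thesis unfolding clockwise_def by auto
qed

lemma single_valued_clockwise: "single_valued clockwise"
  unfolding clockwise_def single_valued_def using f_eq_iff by auto

lemma single_valued_counterclockwise: "single_valued (clockwise\<inverse>)"
proof -
  have "i = j" if "i < n" "j < n" "f (Suc i mod n) = f (Suc j mod n)" for i j
    using that f_eq_iff[of "Suc i mod n" "Suc j mod n"] length_ge_3 by (auto simp: mod_Suc split: if_splits)
  then show ?thesis unfolding clockwise_def single_valued_def by auto
qed

lemma route_oriented:
  "is_route E s t p \<Longrightarrow> route_arcs p \<subseteq> clockwise \<or> route_arcs p \<subseteq> clockwise\<inverse>"
  using route_arcs_oriented[OF single_valued_clockwise single_valued_counterclockwise]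
  unfolding is_route_iff darcs_cycle by blast

end

(* Then
   cost_A(F2) <= cost_A(F1) <= cost_B(F1) <= cost_B(F2) <= cost_A(F2) collapses, and strict
   monotonicity of the arc costs forces F1 = F2 on A. *)
lemma equal_loads_from_cost_sandwich:
  fixes g :: "'a \<Rightarrow> real \<Rightarrow> real" and F1 F2 :: "'a \<Rightarrow> real"
  assumes "finite A"
    and strict: "\<And>a. a \<in> A \<union> B \<Longrightarrow> strict_mono_on {0..} (g a)"
    and nonneg: "\<And>a. a \<in> A \<union> B \<Longrightarrow> 0 \<le> F1 a \<and> 0 \<le> F2 a"
    and up_on_A: "\<And>a. a \<in> A \<Longrightarrow> F2 a \<le> F1 a"
    and down_on_B: "\<And>a. a \<in> B \<Longrightarrow> F1 a \<le> F2 a"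
    and opt1: "(\<Sum>a\<in>A. g a (F1 a)) \<le> (\<Sum>a\<in>B. g a (F1 a))"
    and opt2: "(\<Sum>a\<in>B. g a (F2 a)) \<le> (\<Sum>a\<in>A. g a (F2 a))"
    and a: "a \<in> A"
  shows "F1 a = F2 a"
proof (rule ccontr)
  have mono: "g b u \<le> g b v" if "b \<in> A \<union> B" "0 \<le> u" "u \<le> v" for b u v
    using strict_mono_on_leD[OF strict[OF that(1)]] that by auto
  assume "F1 a \<noteq> F2 a"
  then have "g a (F2 a) < g a (F1 a)"
    using up_on_A[OF a] nonneg[of a] a strict_mono_onD[OF strict] by force
  then have "(\<Sum>b\<in>A. g b (F2 b)) < (\<Sum>b\<in>A. g b (F1 b))"
    using \<open>finite A\<close> a up_on_A nonneg mono by (intro sum_strict_mono_ex1) auto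
  also have "\<dots> \<le> (\<Sum>b\<in>B. g b (F1 b))" by (rule opt1)
  also have "\<dots> \<le> (\<Sum>b\<in>B. g b (F2 b))"
    using down_on_B nonneg mono by (intro sum_mono) auto
  also have "\<dots> \<le> (\<Sum>b\<in>A. g b (F2 b))" by (rule opt2)
  finally show False by simp
qed

lemma Union_unique_image:
  assumes "P p" and "\<And>q. P q \<Longrightarrow> q = p"
  shows "\<Union>{g q | q. P q} = g p"
proof -
  have "{g q | q. P q} = {g p}" using assms by blast
  then show ?thesis by simp
qed

locale cycle_game = cycle_graph V E n f for V :: "'v set" and E n f +
  fixes I :: "real set" and L :: "('v \<times> 'v) set" and od :: "real \<Rightarrow> 'v \<times> 'v"
    and c :: "real \<Rightarrow> ('v \<times> 'v) \<Rightarrow> real \<Rightarrow> real"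
  assumes bounded_users: "bounded I"
    and partition: "valid_partition L I od"
    and costs: "valid_costs E I c"
    and finite_pairs: "finite L"
    and loopless: "\<And>s t. (s, t) \<in> L \<Longrightarrow> s \<noteq> t"
begin

(* Routes of an OD-pair, and the arc sets of its (unique) clockwise and counterclockwise
   route; a union over all such routes avoids choosing one. *)
definition route_for :: "'v \<times> 'v \<Rightarrow> 'v list \<Rightarrow> bool" where
  "route_for k p \<longleftrightarrow> is_route E (fst k) (snd k) p"

definition cw_arcs :: "'v \<times> 'v \<Rightarrow> ('v \<times> 'v) set" where
  "cw_arcs k = \<Union>{route_arcs p | p. route_for k p \<and> route_arcs p \<subseteq> clockwise}"

definition ccw_arcs :: "'v \<times> 'v \<Rightarrow> ('v \<times> 'v) set" where
  "ccw_arcs k = \<Union>{route_arcs p | p. route_for k p \<and> route_arcs p \<subseteq> clockwise\<inverse>}"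

lemma cw_ccw_arcs_disjoint: "cw_arcs k \<inter> ccw_arcs k' = {}"
  using clockwise_antisym unfolding cw_arcs_def ccw_arcs_def by blast

(* OD-pairs have distinct endpoints, so every route has at least two vertices and
   hence at least one arc. *)
lemma route_for_long:
  assumes "k \<in> L" and "route_for k p"
  shows "2 \<le> length p"
proof -
  have "hd p \<noteq> last p" "p \<noteq> []"
    using assms loopless[of "fst k" "snd k"] unfolding route_for_def is_route_iff by auto
  then show ?thesis by (cases p rule: remdups_adj.cases) simp_all
qed

lemma route_for_arcs_nonempty: "k \<in> L \<Longrightarrow> route_for k p \<Longrightarrow> route_arcs p \<noteq> {}"
  using route_arcs_source_sink(1)[of p] route_for_long[of k p]
  unfolding route_for_def is_route_iff by auto

lemma route_for_determined:
  assumes "single_valued R" "route_for k p" "route_for k q" "route_arcs p \<subseteq> R" "route_arcs q \<subseteq> R"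
  shows "p = q"
  using assms route_unique_in_single_valued[of R p q] unfolding route_for_def is_route_iff by auto

lemma route_arcs_cases:
  assumes "k \<in> L" and "route_for k p"
  shows "route_arcs p = (if route_arcs p \<subseteq> clockwise then cw_arcs k else ccw_arcs k)"
proof (cases "route_arcs p \<subseteq> clockwise")
  case True
  then have "cw_arcs k = route_arcs p"
    unfolding cw_arcs_def using assms(2)
    by (intro Union_unique_image) (auto intro: route_for_determined[OF single_valued_clockwise])
  then show ?thesis using True by simp
next
  case False
  then have "route_arcs p \<subseteq> clockwise\<inverse>"
    using assms(2) route_oriented unfolding route_for_def by blast
  then have "ccw_arcs k = route_arcs p"
    unfolding ccw_arcs_def using assms(2)
    by (intro Union_unique_image) (auto intro: route_for_determined[OF single_valued_counterclockwise])
  then show ?thesis using False by simp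
qed

definition users :: "'v \<times> 'v \<Rightarrow> real set" where
  "users k = {x \<in> I. od x = k}"

definition cw_users :: "(real \<Rightarrow> 'v list) \<Rightarrow> 'v \<times> 'v \<Rightarrow> real set" where
  "cw_users \<sigma> k = {x \<in> users k. route_arcs (\<sigma> x) \<subseteq> clockwise}"

definition cw_mass :: "(real \<Rightarrow> 'v list) \<Rightarrow> 'v \<times> 'v \<Rightarrow> real" where
  "cw_mass \<sigma> k = measure lebesgue (cw_users \<sigma> k)"

lemma equilibrium_route:
  "is_equilibrium E I od c \<sigma> \<Longrightarrow> x \<in> I \<Longrightarrow> od x \<in> L \<and> route_for (od x) (\<sigma> x)"
  using partition unfolding is_equilibrium_def valid_partition_def route_for_def by auto

lemma finite_user_measure: "S \<subseteq> I \<Longrightarrow> S \<in> sets lebesgue \<Longrightarrow> emeasure lebesgue S \<noteq> \<infinity>"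
proof -
  assume "S \<subseteq> I" "S \<in> sets lebesgue"
  then have "S \<in> lmeasurable"
    using bounded_users bounded_subset bounded_set_imp_lmeasurable by blast
  then show ?thesis by (auto simp: fmeasurable_def)
qed

lemma users_measurable: "k \<in> L \<Longrightarrow> users k \<in> sets lebesgue"
  using partition unfolding valid_partition_def users_def by auto

(* The clockwise users of k all use the same route, so they form a measurable set. *)
lemma cw_users_measurable:
  assumes eq: "is_equilibrium E I od c \<sigma>" and k: "k \<in> L"
  shows "cw_users \<sigma> k \<in> sets lebesgue"
proof (cases "cw_users \<sigma> k = {}")
  case False
  then obtain x0 where x0: "x0 \<in> cw_users \<sigma> k" by blast
  have "route_arcs (\<sigma> x) \<subseteq> clockwise \<longleftrightarrow> \<sigma> x = \<sigma> x0" if "x \<in> users k" for x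
  proof -
    have "route_for k (\<sigma> x)" "route_for k (\<sigma> x0)" "route_arcs (\<sigma> x0) \<subseteq> clockwise"
      using x0 that equilibrium_route[OF eq, of x] equilibrium_route[OF eq, of x0]
      unfolding cw_users_def users_def by auto
    then show ?thesis using route_for_determined[OF single_valued_clockwise] by metis
  qed
  then have "cw_users \<sigma> k = users k \<inter> {x \<in> I. \<sigma> x = \<sigma> x0}"
    unfolding cw_users_def users_def by auto
  moreover have "{x \<in> I. \<sigma> x = \<sigma> x0} \<in> sets lebesgue"
    using eq unfolding is_equilibrium_def by blast
  ultimately show ?thesis using users_measurable[OF k] by auto
qed simp

lemma load_set:
  assumes eq: "is_equilibrium E I od c \<sigma>" and k: "k \<in> L"
  shows "{x \<in> users k. a \<in> route_arcs (\<sigma> x)} =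
    (if a \<in> cw_arcs k then cw_users \<sigma> k else if a \<in> ccw_arcs k then users k - cw_users \<sigma> k else {})"
proof -
  have "route_arcs (\<sigma> x) = (if x \<in> cw_users \<sigma> k then cw_arcs k else ccw_arcs k)"
    if "x \<in> users k" for x
    using route_arcs_cases[OF k, of "\<sigma> x"] equilibrium_route[OF eq, of x] that
    unfolding cw_users_def users_def by (simp split: if_splits)
  moreover have "cw_users \<sigma> k \<subseteq> users k" unfolding cw_users_def by blast
  ultimately show ?thesis
    using cw_ccw_arcs_disjoint[of k k] by auto
qed

lemma flow_decomposition:
  assumes eq: "is_equilibrium E I od c \<sigma>"
  shows "flow I \<sigma> a = (\<Sum>k\<in>L. (if a \<in> cw_arcs k then cw_mass \<sigma> k else 0) +
            (if a \<in> ccw_arcs k then measure lebesgue (users k) - cw_mass \<sigma> k else 0))"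
proof -
  define U where "U k = {x \<in> users k. a \<in> route_arcs (\<sigma> x)}" for k
  have U_measurable: "U k \<in> sets lebesgue" if "k \<in> L" for k
    unfolding U_def load_set[OF eq that]
    using users_measurable[OF that] cw_users_measurable[OF eq that] by auto
  have "{x \<in> I. a \<in> route_arcs (\<sigma> x)} = (\<Union>k\<in>L. U k)"
    using equilibrium_route[OF eq] unfolding U_def users_def by auto
  then have "flow I \<sigma> a = measure lebesgue (\<Union>k\<in>L. U k)"
    unfolding flow_def by simp
  also have "\<dots> = (\<Sum>k\<in>L. measure lebesgue (U k))"
    using U_measurable finite_user_measure
    by (intro measure_finite_Union finite_pairs) (auto simp: disjoint_family_on_def U_def users_def)
  also have "\<dots> = (\<Sum>k\<in>L. (if a \<in> cw_arcs k then cw_mass \<sigma> k else 0) +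
            (if a \<in> ccw_arcs k then measure lebesgue (users k) - cw_mass \<sigma> k else 0))"
  proof (rule sum.cong[OF refl])
    fix k assume k: "k \<in> L"
    have "measure lebesgue (users k - cw_users \<sigma> k) = measure lebesgue (users k) - cw_mass \<sigma> k"
      unfolding cw_mass_def using users_measurable[OF k] cw_users_measurable[OF eq k]
      by (intro measure_Diff finite_user_measure) (auto simp: users_def cw_users_def)
    then show "measure lebesgue (U k) = (if a \<in> cw_arcs k then cw_mass \<sigma> k else 0) +
            (if a \<in> ccw_arcs k then measure lebesgue (users k) - cw_mass \<sigma> k else 0)"
      unfolding U_def load_set[OF eq k] using cw_ccw_arcs_disjoint[of k k]
      by (auto simp: cw_mass_def)
  qed
  finally show ?thesis .
qed

definition shift :: "(real \<Rightarrow> 'v list) \<Rightarrow> (real \<Rightarrow> 'v list) \<Rightarrow> 'v \<times> 'v \<Rightarrow> real" where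
  "shift \<sigma>1 \<sigma>2 k = cw_mass \<sigma>1 k - cw_mass \<sigma>2 k"

definition orient :: "'v \<times> 'v \<Rightarrow> 'v \<times> 'v \<Rightarrow> real" where
  "orient k a = (if a \<in> cw_arcs k then 1 else 0) - (if a \<in> ccw_arcs k then 1 else 0)"

lemma orient_cw: "a \<in> cw_arcs k \<Longrightarrow> orient k a = 1"
  and orient_ccw: "a \<in> ccw_arcs k \<Longrightarrow> orient k a = -1"
  using cw_ccw_arcs_disjoint[of k k] unfolding orient_def by auto

lemma shift_swap: "shift \<sigma>2 \<sigma>1 k = - shift \<sigma>1 \<sigma>2 k"
  unfolding shift_def by simp

lemma flow_difference:
  assumes e1: "is_equilibrium E I od c \<sigma>1" and e2: "is_equilibrium E I od c \<sigma>2"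
  shows "flow I \<sigma>1 a - flow I \<sigma>2 a = (\<Sum>k\<in>L. orient k a * shift \<sigma>1 \<sigma>2 k)"
  unfolding flow_decomposition[OF e1] flow_decomposition[OF e2] sum_subtractf[symmetric]
  using cw_ccw_arcs_disjoint by (intro sum.cong) (auto simp: orient_def shift_def)

lemma flow_difference_at:
  assumes e1: "is_equilibrium E I od c \<sigma>1" and e2: "is_equilibrium E I od c \<sigma>2" and l: "l \<in> L"
  shows "flow I \<sigma>1 a - flow I \<sigma>2 a =
           orient l a * shift \<sigma>1 \<sigma>2 l + (\<Sum>k\<in>L - {l}. orient k a * shift \<sigma>1 \<sigma>2 k)"
  using flow_difference[OF e1 e2] sum.remove[OF finite_pairs l] by simp

definition dominant :: "(real \<Rightarrow> 'v list) \<Rightarrow> (real \<Rightarrow> 'v list) \<Rightarrow> 'v \<times> 'v \<Rightarrow> bool" where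
  "dominant \<sigma>1 \<sigma>2 l \<longleftrightarrow> l \<in> L \<and> 0 < shift \<sigma>1 \<sigma>2 l \<and> (\<forall>k\<in>L. \<bar>shift \<sigma>1 \<sigma>2 k\<bar> \<le> shift \<sigma>1 \<sigma>2 l)"

lemma other_pair_bounded:
  assumes "card L \<le> 2" and dom: "dominant \<sigma>1 \<sigma>2 l"
  shows "\<bar>\<Sum>k\<in>L - {l}. orient k a * shift \<sigma>1 \<sigma>2 k\<bar> \<le> shift \<sigma>1 \<sigma>2 l"
proof -
  have l: "l \<in> L" and pos: "0 < shift \<sigma>1 \<sigma>2 l" using dom unfolding dominant_def by auto
  have term_bound: "\<bar>orient k a * shift \<sigma>1 \<sigma>2 k\<bar> \<le> shift \<sigma>1 \<sigma>2 l" if "k \<in> L" for k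
  proof -
    have "\<bar>orient k a\<bar> \<le> 1" unfolding orient_def by auto
    moreover have "\<bar>shift \<sigma>1 \<sigma>2 k\<bar> \<le> shift \<sigma>1 \<sigma>2 l" using dom that unfolding dominant_def by blast
    ultimately show ?thesis
      using mult_mono[of "\<bar>orient k a\<bar>" 1 "\<bar>shift \<sigma>1 \<sigma>2 k\<bar>" "shift \<sigma>1 \<sigma>2 l"]
      by (simp add: abs_mult)
  qed
  have "\<bar>\<Sum>k\<in>L - {l}. orient k a * shift \<sigma>1 \<sigma>2 k\<bar> \<le> (\<Sum>k\<in>L - {l}. shift \<sigma>1 \<sigma>2 l)"
    using term_bound by (intro order.trans[OF sum_abs sum_mono]) auto
  also have "\<dots> = real (card (L - {l})) * shift \<sigma>1 \<sigma>2 l" by simp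
  also have "\<dots> \<le> shift \<sigma>1 \<sigma>2 l"
    using assms(1) l finite_pairs pos by (simp add: card_Diff_singleton mult_le_cancel_right1)
  finally show ?thesis .
qed

lemma switching_user:
  assumes e1: "is_equilibrium E I od c \<sigma>1" and e2: "is_equilibrium E I od c \<sigma>2"
    and l: "l \<in> L" and pos: "0 < shift \<sigma>1 \<sigma>2 l"
  obtains x where "x \<in> users l" "route_for l (\<sigma>1 x)" "route_for l (\<sigma>2 x)"
    "route_arcs (\<sigma>1 x) = cw_arcs l" "route_arcs (\<sigma>2 x) = ccw_arcs l"
proof -
  have "\<not> cw_users \<sigma>1 l \<subseteq> cw_users \<sigma>2 l"
  proof
    assume "cw_users \<sigma>1 l \<subseteq> cw_users \<sigma>2 l"
    moreover have "emeasure lebesgue (cw_users \<sigma>2 l) \<noteq> \<infinity>"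
      using cw_users_measurable[OF e2 l] by (intro finite_user_measure) (auto simp: cw_users_def users_def)
    ultimately have "cw_mass \<sigma>1 l \<le> cw_mass \<sigma>2 l"
      unfolding cw_mass_def using cw_users_measurable[OF e1 l] cw_users_measurable[OF e2 l]
      by (intro measure_mono_fmeasurable) (auto simp: fmeasurable_def less_top)
    then show False using pos unfolding shift_def by simp
  qed
  then obtain x where x1: "x \<in> cw_users \<sigma>1 l" and x2: "x \<notin> cw_users \<sigma>2 l" by blast
  then have x: "x \<in> users l" unfolding cw_users_def by blast
  then have routes: "route_for l (\<sigma>1 x)" "route_for l (\<sigma>2 x)"
    using equilibrium_route[OF e1, of x] equilibrium_route[OF e2, of x] unfolding users_def by auto
  show ?thesis
  proof
    show "route_arcs (\<sigma>1 x) = cw_arcs l" "route_arcs (\<sigma>2 x) = ccw_arcs l"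
      using route_arcs_cases[OF l routes(1)] route_arcs_cases[OF l routes(2)] x x1 x2
      unfolding cw_users_def by auto
  qed (use x routes in auto)
qed

lemma equilibrium_optimal:
  assumes "is_equilibrium E I od c \<sigma>" and "x \<in> users k" and "route_for k q"
  shows "(\<Sum>a\<in>route_arcs (\<sigma> x). c x a (flow I \<sigma> a)) \<le> (\<Sum>a\<in>route_arcs q. c x a (flow I \<sigma> a))"
  using assms unfolding is_equilibrium_def route_for_def users_def route_cost_def by auto

lemma cost_strict_mono:
  "x \<in> I \<Longrightarrow> route_for k p \<Longrightarrow> a \<in> route_arcs p \<Longrightarrow> strict_mono_on {0..} (c x a)"
  using costs unfolding valid_costs_def route_for_def is_route_iff by blast

(* For a dominant pair l the flows increase on the clockwise route of l and decrease on
   its counterclockwise route; the switching user and the cost sandwich make them equal on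
   the clockwise route. *)
lemma loads_agree_on_cw_arcs:
  assumes e1: "is_equilibrium E I od c \<sigma>1" and e2: "is_equilibrium E I od c \<sigma>2"
    and card: "card L \<le> 2" and dom: "dominant \<sigma>1 \<sigma>2 l" and a: "a \<in> cw_arcs l"
  shows "flow I \<sigma>1 a = flow I \<sigma>2 a"
proof -
  have l: "l \<in> L" and pos: "0 < shift \<sigma>1 \<sigma>2 l" using dom unfolding dominant_def by auto
  obtain x where x: "x \<in> users l" "route_for l (\<sigma>1 x)" "route_for l (\<sigma>2 x)"
    and arcs: "route_arcs (\<sigma>1 x) = cw_arcs l" "route_arcs (\<sigma>2 x) = ccw_arcs l"
    using switching_user[OF e1 e2 l pos] by blast
  show ?thesis
  proof (rule equal_loads_from_cost_sandwich[where g = "c x" and A = "cw_arcs l" and B = "ccw_arcs l"])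
    show "finite (cw_arcs l)" unfolding arcs(1)[symmetric] route_arcs_def by simp
    show "strict_mono_on {0..} (c x b)" if "b \<in> cw_arcs l \<union> ccw_arcs l" for b
    proof -
      have "x \<in> I" using x(1) unfolding users_def by blast
      then show ?thesis
        using that x(2,3) arcs cost_strict_mono[of x l] by blast
    qed
    show "0 \<le> flow I \<sigma>1 b \<and> 0 \<le> flow I \<sigma>2 b" for b
      unfolding flow_def by simp
    show "flow I \<sigma>2 b \<le> flow I \<sigma>1 b" if "b \<in> cw_arcs l" for b
      using flow_difference_at[OF e1 e2 l, of b] other_pair_bounded[OF card dom, of b]
        orient_cw[OF that] by auto
    show "flow I \<sigma>1 b \<le> flow I \<sigma>2 b" if "b \<in> ccw_arcs l" for b
      using flow_difference_at[OF e1 e2 l, of b] other_pair_bounded[OF card dom, of b]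
        orient_ccw[OF that] by auto
    show "(\<Sum>b\<in>cw_arcs l. c x b (flow I \<sigma>1 b)) \<le> (\<Sum>b\<in>ccw_arcs l. c x b (flow I \<sigma>1 b))"
      using equilibrium_optimal[OF e1 x(1,3)] arcs by simp
    show "(\<Sum>b\<in>ccw_arcs l. c x b (flow I \<sigma>2 b)) \<le> (\<Sum>b\<in>cw_arcs l. c x b (flow I \<sigma>2 b))"
      using equilibrium_optimal[OF e2 x(1,2)] arcs by simp
  qed (rule a)
qed

(* The balance on the clockwise route of l can only come from another pair k whose
   clockwise route contains that of l and whose shift exactly cancels that of l. *)
lemma partner_pair:
  assumes e1: "is_equilibrium E I od c \<sigma>1" and e2: "is_equilibrium E I od c \<sigma>2"
    and card: "card L \<le> 2" and dom: "dominant \<sigma>1 \<sigma>2 l"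
  obtains k where "k \<in> L" "k \<noteq> l" "shift \<sigma>1 \<sigma>2 k = - shift \<sigma>1 \<sigma>2 l" "cw_arcs l \<subseteq> cw_arcs k"
proof -
  have l: "l \<in> L" and pos: "0 < shift \<sigma>1 \<sigma>2 l" using dom unfolding dominant_def by auto
  define R where "R a = (\<Sum>k\<in>L - {l}. orient k a * shift \<sigma>1 \<sigma>2 k)" for a
  have balance: "R a = - shift \<sigma>1 \<sigma>2 l" if "a \<in> cw_arcs l" for a
    using flow_difference_at[OF e1 e2 l, of a] loads_agree_on_cw_arcs[OF e1 e2 card dom that]
      orient_cw[OF that] unfolding R_def by simp
  obtain x where "route_for l (\<sigma>1 x)" "route_arcs (\<sigma>1 x) = cw_arcs l"
    using switching_user[OF e1 e2 l pos] by metis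
  then obtain a0 where a0: "a0 \<in> cw_arcs l" using route_for_arcs_nonempty[OF l] by blast
  have "L - {l} \<noteq> {}"
  proof
    assume none: "L - {l} = {}"
    have "R a0 = 0" unfolding R_def none by simp
    then show False using balance[OF a0] pos by simp
  qed
  moreover have "card (L - {l}) \<le> 1" using card l finite_pairs by (simp add: card_Diff_singleton)
  ultimately obtain k where k: "L - {l} = {k}"
    using finite_pairs by (metis card_0_eq card_1_singletonE finite_Diff le_antisym less_one not_le)
  have hit: "a \<in> cw_arcs k \<and> shift \<sigma>1 \<sigma>2 k = - shift \<sigma>1 \<sigma>2 l" if a: "a \<in> cw_arcs l" for a
  proof -
    have "orient k a * shift \<sigma>1 \<sigma>2 k = - shift \<sigma>1 \<sigma>2 l"
      using balance[OF a] unfolding R_def k by simp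
    moreover have "a \<notin> ccw_arcs k" using a cw_ccw_arcs_disjoint by blast
    ultimately show ?thesis using pos unfolding orient_def by (auto split: if_splits)
  qed
  show ?thesis
  proof
    show "k \<in> L" "k \<noteq> l" using k by auto
    show "shift \<sigma>1 \<sigma>2 k = - shift \<sigma>1 \<sigma>2 l" using hit[OF a0] by blast
    show "cw_arcs l \<subseteq> cw_arcs k" using hit by blast
  qed
qed

lemma route_arcs_determine_pair:
  assumes "k \<in> L" "l \<in> L" "route_for k p" "route_for l q" "route_arcs p = route_arcs q"
  shows "k = l"
proof -
  have "hd p = hd q" "last p = last q"
    using route_arcs_source_sink[of p] route_arcs_source_sink[of q] assms
      route_for_long[of k p] route_for_long[of l q]
    unfolding route_for_def is_route_iff by auto
  then show ?thesis using assms(3,4) unfolding route_for_def is_route_iff by (simp add: prod_eq_iff)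
qed

(* Applying the partner argument twice (the second time with the profiles swapped) shows
   that two distinct pairs would have equal clockwise routes, which is impossible. *)
lemma no_dominant_pair:
  assumes e1: "is_equilibrium E I od c \<sigma>1" and e2: "is_equilibrium E I od c \<sigma>2"
    and card: "card L \<le> 2"
  shows "\<not> dominant \<sigma>1 \<sigma>2 l"
proof
  assume dom: "dominant \<sigma>1 \<sigma>2 l"
  obtain k where k: "k \<in> L" "k \<noteq> l" "shift \<sigma>1 \<sigma>2 k = - shift \<sigma>1 \<sigma>2 l"
    and lk: "cw_arcs l \<subseteq> cw_arcs k"
    using partner_pair[OF e1 e2 card dom] by blast
  have dom': "dominant \<sigma>2 \<sigma>1 k"
    using dom k unfolding dominant_def shift_swap[of \<sigma>2 \<sigma>1] by auto
  obtain k' where "k' \<in> L" "k' \<noteq> k" and kk': "cw_arcs k \<subseteq> cw_arcs k'"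
    using partner_pair[OF e2 e1 card dom'] by blast
  moreover have "card {l, k, k'} \<le> card L"
    using dom k \<open>k' \<in> L\<close> finite_pairs unfolding dominant_def by (intro card_mono) auto
  ultimately have "k' = l" using card k(2) by (cases "k' = l") auto
  with lk kk' have same_arcs: "cw_arcs l = cw_arcs k" by blast
  obtain x where "route_for l (\<sigma>1 x)" "route_arcs (\<sigma>1 x) = cw_arcs l"
    using switching_user[OF e1 e2] dom unfolding dominant_def by metis
  moreover obtain y where "route_for k (\<sigma>2 y)" "route_arcs (\<sigma>2 y) = cw_arcs k"
    using switching_user[OF e2 e1] dom' unfolding dominant_def by metis
  ultimately have "l = k"
    using route_arcs_determine_pair[of l k] k(1) dom same_arcs unfolding dominant_def by metis
  then show False using k(2) by simp
qed

lemma equilibria_same_flow: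
  assumes e1: "is_equilibrium E I od c \<sigma>1" and e2: "is_equilibrium E I od c \<sigma>2"
    and card: "card L \<le> 2"
  shows "flow I \<sigma>1 a = flow I \<sigma>2 a"
proof -
  have "shift \<sigma>1 \<sigma>2 k = 0" if "k \<in> L" for k
  proof (rule ccontr)
    assume nonzero: "shift \<sigma>1 \<sigma>2 k \<noteq> 0"
    define M where "M = Max ((\<lambda>j. \<bar>shift \<sigma>1 \<sigma>2 j\<bar>) ` L)"
    have "M \<in> (\<lambda>j. \<bar>shift \<sigma>1 \<sigma>2 j\<bar>) ` L"
      unfolding M_def using finite_pairs that by (intro Max_in) auto
    then obtain l where l: "l \<in> L" "\<bar>shift \<sigma>1 \<sigma>2 l\<bar> = M" by blast
    have max: "\<bar>shift \<sigma>1 \<sigma>2 j\<bar> \<le> M" if "j \<in> L" for j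
      unfolding M_def using finite_pairs that by simp
    have "0 < M" using max[OF that] nonzero by linarith
    then have "dominant \<sigma>1 \<sigma>2 l \<or> dominant \<sigma>2 \<sigma>1 l"
      using l max unfolding dominant_def shift_swap[of \<sigma>2 \<sigma>1]
      by (cases "0 < shift \<sigma>1 \<sigma>2 l") auto
    then show False using no_dominant_pair[OF e1 e2 card] no_dominant_pair[OF e2 e1 card] by blast
  qed
  then show ?thesis using flow_difference[OF e1 e2, of a] by simp
qed

end

theorem corollary1:
  fixes V :: "'v set" and E :: "'v set set" and T :: "'v set" and L :: "('v \<times> 'v) set"
    and I :: "real set"
  assumes "is_interval I" and "bounded I"
    and "is_cycle V E"
    and "demand_digraph V T L"
    and "card L \<le> 2"
  shows "uniqueness_property I V E T L"
  unfolding uniqueness_property_def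
proof (intro allI impI ballI)
  fix od :: "real \<Rightarrow> 'v \<times> 'v" and c \<sigma>1 \<sigma>2 a
  assume partition: "valid_partition L I od" and costs: "valid_costs E I c"
    and e1: "is_equilibrium E I od c \<sigma>1" and e2: "is_equilibrium E I od c \<sigma>2"
  obtain n f where cycle: "3 \<le> n" "bij_betw f {..<n} V" "E = {{f i, f (Suc i mod n)} | i. i < n}"
    and "finite V"
    using assms(3) unfolding is_cycle_def supply_graph_def by blast
  moreover have "L \<subseteq> V \<times> V" and loopless: "\<And>s t. (s, t) \<in> L \<Longrightarrow> s \<noteq> t"
    using assms(4) unfolding demand_digraph_def by auto
  ultimately have "finite L" by (metis finite_SigmaI finite_subset)
  interpret cycle_game V E n f I L od c
    using cycle assms(2) partition costs \<open>finite L\<close> loopless by unfold_locales auto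
  show "flow I \<sigma>1 a = flow I \<sigma>2 a"
    using equilibria_same_flow[OF e1 e2 assms(5)] .
qed

end
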